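(* Let $\mathcal{H}$ be a complex Hilbert space and $B,C\in\mathcal{B}(\mathcal{H})$. Then for every $0\le\alpha\le1$, $$\begin{aligned}w^4\left(\begin{bmatrix}0 & B\\ C & 0\end{bmatrix}\right)\le{}& \frac{1+\alpha}{8}\max\left\{\big\||B|^4+|C^*|^4\big\|,\ \big\||B^*|^4+|C|^4\big\|\right\}+\frac{1-\alpha}{4}\max\{w^2(BC),w^2(CB)\}\\&+\frac14\max\left\{\big\||B|^2+|C^*|^2\big\|,\ \big\||B^*|^2+|C|^2\big\|\right\}\cdot\max\{w(BC),w(CB)\}.\end{aligned}$$
   Context: $\mathcal{B}(\mathcal{H})$ is the algebra of bounded linear operators on $\mathcal{H}$ with operator norm $\|\cdot\|$. For $A\in\mathcal{B}(\mathcal{H})$, $A^*$ is the adjoint, $|A|=(A^*A)^{1/2}$, $|A^*|=(AA^* )^{1/2}$, and $w(A)=\sup_{\|x\|=1}|\langle Ax,x\rangle|$ is the numerical radius. The operator matrix $\begin{bmatrix}A&B\\C&D\end{bmatrix}$ acts on $\mathcal{H}\oplus\mathcal{H}$ by $(x_1,x_2)\mapsto(Ax_1+Bx_2,\,Cx_1+Dx_2)$; $0$ denotes the zero operator. *)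

theory Defs
  imports "HOL-Analysis.Analysis"
begin

class chilbert_space = banach +
  fixes scaleC :: "complex \<Rightarrow> 'a \<Rightarrow> 'a"
    and cinner :: "'a \<Rightarrow> 'a \<Rightarrow> complex"
  assumes scaleC_add_right: "scaleC a (x + y) = scaleC a x + scaleC a y"
    and scaleC_add_left: "scaleC (a + b) x = scaleC a x + scaleC b x"
    and scaleC_scaleC: "scaleC a (scaleC b x) = scaleC (a * b) x"
    and scaleC_one: "scaleC 1 x = x"
    and scaleR_scaleC: "scaleR r x = scaleC (complex_of_real r) x"
    and cinner_conj: "cinner x y = cnj (cinner y x)"
    and cinner_add_left: "cinner (x + y) z = cinner x z + cinner y z"
    and cinner_scaleC_left: "cinner (scaleC a x) y = a * cinner x y"
    and cinner_self: "cinner x x = complex_of_real ((norm x)\<^sup>2)"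

definition bounded_clinear :: "('a::chilbert_space \<Rightarrow> 'a) \<Rightarrow> bool" where
  "bounded_clinear T \<longleftrightarrow>
     (\<forall>x y. T (x + y) = T x + T y) \<and>
     (\<forall>a x. T (scaleC a x) = scaleC a (T x)) \<and>
     (\<exists>K. \<forall>x. norm (T x) \<le> norm x * K)"

definition cadjoint :: "('a::chilbert_space \<Rightarrow> 'a) \<Rightarrow> ('a \<Rightarrow> 'a)" where
  "cadjoint T = (THE S. \<forall>x y. cinner (T x) y = cinner x (S y))"

definition opadd :: "('a::chilbert_space \<Rightarrow> 'a) \<Rightarrow> ('a \<Rightarrow> 'a) \<Rightarrow> ('a \<Rightarrow> 'a)" where
  "opadd S T = (\<lambda>x. S x + T x)"

definition abs_sq :: "('a::chilbert_space \<Rightarrow> 'a) \<Rightarrow> ('a \<Rightarrow> 'a)" where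
  "abs_sq T = cadjoint T \<circ> T"

definition abs_adj_sq :: "('a::chilbert_space \<Rightarrow> 'a) \<Rightarrow> ('a \<Rightarrow> 'a)" where
  "abs_adj_sq T = T \<circ> cadjoint T"

text \<open>Numerical radius (supremum over the closed unit ball, which agrees with the
supremum over the unit sphere on nonzero spaces and gives 0 on the zero space).\<close>
definition numrad :: "('a::chilbert_space \<Rightarrow> 'a) \<Rightarrow> real" where
  "numrad T = (SUP x\<in>{x. norm x \<le> 1}. cmod (cinner (T x) x))"

text \<open>Numerical radius of the operator matrix [[A,B],[C,D]] acting on H \<oplus> H,
with the direct-sum inner product <(x1,x2),(y1,y2)> = <x1,y1> + <x2,y2>.\<close>
definition numrad_block ::
  "('a::chilbert_space \<Rightarrow> 'a) \<Rightarrow> ('a \<Rightarrow> 'a) \<Rightarrow> ('a \<Rightarrow> 'a) \<Rightarrow> ('a \<Rightarrow> 'a) \<Rightarrow> real" where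
  "numrad_block A B C D =
     (SUP p\<in>{(x1, x2). (norm x1)\<^sup>2 + (norm x2)\<^sup>2 \<le> 1}.
        cmod (cinner (A (fst p) + B (snd p)) (fst p) + cinner (C (fst p) + D (snd p)) (snd p)))"

end

theory Submission
  imports Defs
begin

text \<open>Write x = (x1, x2) for a vector of the unit ball of H \<oplus> H, a = (B x2, C x1) and
b = (C* x2, B* x1). The form of the operator matrix at x is z = <a, x> = <x, b>, so Buzano's
inequality gives |z|^2 \<le> (|a| |b| + t) / 2 with t = |<a, b>| = |<CB x2, x2> + <BC x1, x1>|,
which is at most both |a| |b| and max (w(BC), w(CB)). Squaring, the cross term 2 |a| |b| t is
controlled by |a|^2 + |b|^2 = <(|B|^2 + |C*|^2) x2, x2> + <(|B*|^2 + |C|^2) x1, x1>; the term t^2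
is split as alpha t^2 + (1 - alpha) t^2; and (|a| |b|)^2 \<le> (|a|^4 + |b|^4) / 2, where
|a|^4 \<le> ||B|^2 x2|^2 + ||C|^2 x1|^2 by Cauchy-Schwarz and similarly for b, which produces the
operators |B|^4 + |C*|^4 and |B*|^4 + |C|^4. Adjoints exist by the Riesz representation theorem,
proved here from the parallelogram law.\<close>

section \<open>Inner-product inequalities\<close>

lemma cinner_add_right: "cinner z (x + y) = cinner z x + cinner z (y::'a::chilbert_space)"
  by (metis cinner_add_left cinner_conj complex_cnj_add)

lemma cinner_scaleC_right: "cinner x (scaleC a y) = cnj a * cinner x (y::'a::chilbert_space)"
  by (metis cinner_conj cinner_scaleC_left complex_cnj_mult)

lemma cinner_zero_right [simp]: "cinner y (0::'a::chilbert_space) = 0"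
  using cinner_add_right[of y "0::'a" 0] by simp

lemma cinner_diff_left: "cinner (x - z) (y::'a::chilbert_space) = cinner x y - cinner z y"
  using cinner_add_left[of "x - z" z y] by simp

lemma cinner_diff_right: "cinner y (x - z) = cinner y x - cinner y (z::'a::chilbert_space)"
  using cinner_add_right[of y "x - z" z] by simp

lemma cinner_self_eq_zero [simp]: "cinner x x = 0 \<longleftrightarrow> x = (0::'a::chilbert_space)"
  by (simp add: cinner_self)

lemma norm_scaleC: "norm (scaleC a (x::'a::chilbert_space)) = cmod a * norm x"
proof -
  have "complex_of_real ((norm (scaleC a x))\<^sup>2) = complex_of_real ((cmod a * norm x)\<^sup>2)"
    unfolding cinner_self[symmetric]
    by (simp add: cinner_scaleC_left cinner_scaleC_right complex_norm_square
        power_mult_distrib mult.assoc cinner_self[of x] del: of_real_power)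
  then have "(norm (scaleC a x))\<^sup>2 = (cmod a * norm x)\<^sup>2"
    using of_real_eq_iff by blast
  then show ?thesis
    by simp
qed

lemma cinner_ext: "(\<And>x. cinner x u = cinner x v) \<Longrightarrow> u = (v::'a::chilbert_space)"
  by (metis cinner_diff_right cinner_self_eq_zero eq_iff_diff_eq_0)

lemma parallelogram_law:
  "(norm (x + y))\<^sup>2 + (norm (x - y))\<^sup>2 = 2 * (norm x)\<^sup>2 + 2 * (norm (y::'a::chilbert_space))\<^sup>2"
proof -
  have "cinner (x + y) (x + y) + cinner (x - y) (x - y) = 2 * cinner x x + 2 * cinner y y"
    by (simp add: cinner_add_left cinner_add_right cinner_diff_left cinner_diff_right algebra_simps)
  then have "complex_of_real ((norm (x + y))\<^sup>2 + (norm (x - y))\<^sup>2)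
      = of_real (2 * (norm x)\<^sup>2 + 2 * (norm y)\<^sup>2)"
    by (simp only: cinner_self of_real_add of_real_mult of_real_numeral)
  then show ?thesis
    using of_real_eq_iff by blast
qed

lemma cinner_Cauchy_Schwarz: "cmod (cinner x y) \<le> norm x * norm (y::'a::chilbert_space)"
proof -
  define c where "c = cinner x y"
  define r where "r = (norm y)\<^sup>2"
  define z where "z = scaleC (of_real r) x - scaleC c y"
  have yx: "cinner y x = cnj c" and yy: "cinner y y = of_real r"
    by (simp_all add: c_def r_def cinner_self flip: cinner_conj)
  have "complex_of_real ((norm z)\<^sup>2) = of_real r * (of_real r * cinner x x - c * cnj c)"
    unfolding cinner_self[symmetric] z_def
    by (simp add: cinner_diff_left cinner_diff_right cinner_scaleC_left cinner_scaleC_right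
        yx yy flip: c_def)
  also have "\<dots> = of_real (r * (r * (norm x)\<^sup>2 - (cmod c)\<^sup>2))"
    by (simp only: cinner_self complex_norm_square of_real_mult of_real_diff)
  finally have "(norm z)\<^sup>2 = r * (r * (norm x)\<^sup>2 - (cmod c)\<^sup>2)"
    using of_real_eq_iff by blast
  then have "0 \<le> r * (r * (norm x)\<^sup>2 - (cmod c)\<^sup>2)"
    by (metis zero_le_power2)
  then have "(cmod c)\<^sup>2 \<le> (norm x * norm y)\<^sup>2" if "y \<noteq> 0"
    using that by (simp add: r_def zero_le_mult_iff power_mult_distrib mult.commute)
  then show ?thesis
    by (cases "y = 0") (auto simp: c_def intro: power2_le_imp_le)
qed

text \<open>The witness c is |e|^2 times the reflection of b in the line through e, so |c| = |e|^2 |b|.\<close>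
lemma Buzano_inequality:
  fixes a e b :: "'a::chilbert_space"
  shows "cmod (cinner a e * cinner e b) \<le> (norm e)\<^sup>2 * (norm a * norm b + cmod (cinner a b)) / 2"
proof -
  define r where "r = (norm e)\<^sup>2"
  define \<beta> where "\<beta> = cinner b e"
  define c where "c = scaleC (2 * \<beta>) e - scaleC (of_real r) b"
  have eb: "cinner e b = cnj \<beta>" and ee: "cinner e e = of_real r"
    by (simp_all add: \<beta>_def r_def cinner_self flip: cinner_conj)
  have "cinner c c = of_real (r\<^sup>2) * cinner b b"
    unfolding c_def
    by (simp add: cinner_diff_left cinner_diff_right cinner_scaleC_left cinner_scaleC_right
        eb ee flip: \<beta>_def) (simp add: algebra_simps power2_eq_square)
  then have "complex_of_real ((norm c)\<^sup>2) = of_real ((r * norm b)\<^sup>2)"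
    by (simp only: cinner_self power_mult_distrib of_real_mult)
  then have "(norm c)\<^sup>2 = (r * norm b)\<^sup>2"
    using of_real_eq_iff by blast
  then have nc: "norm c = r * norm b"
    by (simp add: r_def)
  have "2 * (cinner a e * cinner e b) = cinner a c + of_real r * cinner a b"
    unfolding c_def by (simp add: cinner_diff_right cinner_scaleC_right eb)
  then have "2 * cmod (cinner a e * cinner e b) \<le> cmod (cinner a c) + r * cmod (cinner a b)"
    by (metis norm_mult norm_numeral norm_of_real norm_triangle_ineq abs_of_nonneg r_def zero_le_power2)
  also have "\<dots> \<le> norm a * (r * norm b) + r * cmod (cinner a b)"
    using cinner_Cauchy_Schwarz[of a c] nc by simp
  finally show ?thesis
    unfolding r_def by (simp add: algebra_simps)
qed

section \<open>The direct sum H \<oplus> H\<close>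

instantiation prod :: (chilbert_space, chilbert_space) chilbert_space
begin

definition scaleC_prod_def: "scaleC a p = (scaleC a (fst p), scaleC a (snd p))"

definition cinner_prod_def: "cinner p q = cinner (fst p) (fst q) + cinner (snd p) (snd q)"

instance
proof
  fix p q r :: "'a \<times> 'b" and a b :: complex and s :: real
  show "scaleC a (p + q) = scaleC a p + scaleC a q"
    by (simp add: scaleC_prod_def scaleC_add_right)
  show "scaleC (a + b) p = scaleC a p + scaleC b p"
    by (simp add: scaleC_prod_def scaleC_add_left)
  show "scaleC a (scaleC b p) = scaleC (a * b) p"
    by (simp add: scaleC_prod_def scaleC_scaleC)
  show "scaleC 1 p = p"
    by (simp add: scaleC_prod_def scaleC_one)
  show "scaleR s p = scaleC (of_real s) p"
    by (simp add: scaleC_prod_def scaleR_prod_def scaleR_scaleC)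
  show "cinner p q = cnj (cinner q p)"
    by (simp add: cinner_prod_def flip: cinner_conj)
  show "cinner (p + q) r = cinner p r + cinner q r"
    by (simp add: cinner_prod_def cinner_add_left)
  show "cinner (scaleC a p) q = a * cinner p q"
    by (simp add: cinner_prod_def scaleC_prod_def cinner_scaleC_left algebra_simps)
  show "cinner p p = of_real ((norm p)\<^sup>2)"
    by (simp add: cinner_prod_def cinner_self norm_prod_def del: of_real_power)
qed

end

lemma cinner_Pair: "cinner (a, b) (c, d) = cinner a c + cinner b d"
  by (simp add: cinner_prod_def)

section \<open>Riesz representation\<close>

lemma orthogonal_if_norm_minimal:
  fixes y z :: "'a::chilbert_space"
  assumes min: "\<And>t. norm z \<le> norm (z + scaleC t y)"
  shows "cinner y z = 0"
proof (rule ccontr)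
  define c where "c = cinner y z"
  assume "cinner y z \<noteq> 0"
  then have c: "0 < (cmod c)\<^sup>2"
    by (simp add: c_def)
  define s where "s = 1 / ((norm y)\<^sup>2 + 1)"
  have "0 < (norm y)\<^sup>2 + 1"
    by (simp add: add_nonneg_pos)
  then have s: "0 < s" "s * (norm y)\<^sup>2 < 1"
    by (simp_all add: s_def field_simps)
  define t where "t = - of_real s * cnj c"
  have zy: "cinner z y = cnj c"
    by (simp add: c_def flip: cinner_conj)
  have "complex_of_real ((norm (z + scaleC t y))\<^sup>2)
      = cinner z z + cnj t * cinner z y + t * cinner y z + t * cnj t * cinner y y"
    by (simp add: cinner_self[symmetric] cinner_add_left cinner_add_right cinner_scaleC_left
        cinner_scaleC_right algebra_simps del: of_real_power)
  also have "\<dots> = of_real ((norm z)\<^sup>2) - of_real s * (c * cnj c) * (2 - of_real s * of_real ((norm y)\<^sup>2))"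
    unfolding zy t_def c_def[symmetric] cinner_self
    by (simp add: algebra_simps)
  also have "\<dots> = of_real ((norm z)\<^sup>2 - s * (cmod c)\<^sup>2 * (2 - s * (norm y)\<^sup>2))"
    by (simp flip: complex_norm_square)
  finally have "(norm (z + scaleC t y))\<^sup>2 = (norm z)\<^sup>2 - s * (cmod c)\<^sup>2 * (2 - s * (norm y)\<^sup>2)"
    using of_real_eq_iff by blast
  also have "\<dots> < (norm z)\<^sup>2"
    using s c by simp
  finally show False
    using min[of t] by (meson norm_ge_zero not_less power_mono)
qed

locale bounded_cfunctional =
  fixes f :: "'a::chilbert_space \<Rightarrow> complex"
  assumes add: "f (x + y) = f x + f y"
    and scale: "f (scaleC a x) = a * f x"
    and bounded: "\<exists>K. \<forall>x. cmod (f x) \<le> norm x * K"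
begin

definition fnorm :: real where
  "fnorm = (SUP x\<in>{x. norm x \<le> 1}. Re (f x))"

lemma zero [simp]: "f 0 = 0"
  using add[of 0 0] by simp

lemma diff: "f (x - y) = f x - f y"
  using add[of "x - y" y] by simp

lemma bounded_linear: "bounded_linear f"
proof -
  obtain K where "\<And>x. cmod (f x) \<le> norm x * K"
    using bounded by blast
  then show ?thesis
    by (intro bounded_linear_intro[of f K]) (auto simp: add scaleR_scaleC scale scaleR_conv_of_real)
qed

lemma bdd_above_Re: "bdd_above ((\<lambda>x. Re (f x)) ` {x. norm x \<le> 1})"
proof (rule bdd_aboveI2)
  fix x :: 'a
  assume "x \<in> {x. norm x \<le> 1}"
  then have "Re (f x) \<le> norm x * onorm f"
    using complex_Re_le_cmod[of "f x"] onorm[OF bounded_linear, of x] by (simp add: mult.commute)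
  also have "\<dots> \<le> onorm f"
    using \<open>x \<in> _\<close> onorm_pos_le[OF bounded_linear] by (simp add: mult_left_le_one_le)
  finally show "Re (f x) \<le> onorm f" .
qed

lemma Re_le_fnorm: "norm x \<le> 1 \<Longrightarrow> Re (f x) \<le> fnorm"
  unfolding fnorm_def by (rule cSUP_upper[OF _ bdd_above_Re]) simp

lemma fnorm_nonneg: "0 \<le> fnorm"
  using Re_le_fnorm[of 0] by simp

lemma unit_vector_attaining:
  assumes "y \<noteq> 0" "f y \<noteq> 0"
  obtains u where "norm u = 1" "f u = of_real (cmod (f y) / norm y)"
proof -
  define u where "u = scaleC (cnj (f y) / of_real (cmod (f y) * norm y)) y"
  have "norm u = 1"
    using assms by (simp add: u_def norm_scaleC norm_divide norm_mult)
  moreover have "f u = of_real (cmod (f y) / norm y)"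
    using assms unfolding u_def scale
    by (simp add: complex_norm_square[symmetric] field_simps power2_eq_square del: of_real_power)
  ultimately show ?thesis
    using that by blast
qed

lemma norm_le_fnorm: "cmod (f y) \<le> fnorm * norm y"
proof (cases "y = 0 \<or> f y = 0")
  case True
  then show ?thesis
    using fnorm_nonneg by auto
next
  case False
  then obtain u where "norm u = 1" "f u = of_real (cmod (f y) / norm y)"
    using unit_vector_attaining by blast
  then have "cmod (f y) / norm y \<le> fnorm"
    using Re_le_fnorm[of u] by simp
  then show ?thesis
    using False by (simp add: field_simps)
qed

lemma fnorm_pos:
  assumes "f y \<noteq> 0"
  shows "0 < fnorm"
proof -
  have "y \<noteq> 0"
    using assms by auto
  then obtain u where "norm u = 1" "f u = of_real (cmod (f y) / norm y)"
    using assms unit_vector_attaining by blast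
  then show ?thesis
    using Re_le_fnorm[of u] assms \<open>y \<noteq> 0\<close>
    by (metis Re_complex_of_real divide_pos_pos order_less_le_trans order.refl zero_less_norm_iff)
qed

text \<open>The parallelogram law forces almost-maximisers of Re f on the unit ball to be close.\<close>
lemma almost_maximizers_close:
  assumes "norm x \<le> 1" "norm y \<le> 1" "0 < fnorm" "0 \<le> d" "0 \<le> e"
    and "fnorm - d < Re (f x)" "fnorm - e < Re (f y)"
  shows "(norm (x - y))\<^sup>2 \<le> 4 * (d + e) / fnorm"
proof -
  have "2 * fnorm - (d + e) < Re (f (x + y))"
    using assms(6,7) by (simp add: add)
  also have "\<dots> \<le> fnorm * norm (x + y)"
    using complex_Re_le_cmod norm_le_fnorm order_trans by blast
  finally have sum: "2 - (d + e) / fnorm < norm (x + y)"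
    using assms(3) by (simp add: field_simps)
  have xy: "2 * (norm x)\<^sup>2 + 2 * (norm y)\<^sup>2 \<le> 4"
    using assms(1,2) power_le_one[of "norm x" 2] power_le_one[of "norm y" 2] by simp
  show ?thesis
  proof (cases "0 \<le> 2 - (d + e) / fnorm")
    case True
    then have "(2 - (d + e) / fnorm)\<^sup>2 \<le> (norm (x + y))\<^sup>2"
      using sum by (intro power_mono) auto
    then have "(norm (x - y))\<^sup>2 \<le> 4 - (2 - (d + e) / fnorm)\<^sup>2"
      using parallelogram_law[of x y] xy by linarith
    also have "\<dots> \<le> 4 * (d + e) / fnorm"
      using assms(3-5) by (simp add: power2_eq_square field_simps)
    finally show ?thesis .
  next
    case False
    then have "4 < 4 * (d + e) / fnorm"
      using assms(3) by (simp add: field_simps)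
    moreover have "(norm (x - y))\<^sup>2 \<le> 4"
      using parallelogram_law[of x y] xy zero_le_power2[of "norm (x + y)"] by linarith
    ultimately show ?thesis
      by linarith
  qed
qed

lemma maximizing_sequence_Cauchy:
  assumes "\<And>n. norm (xs n) \<le> 1" "\<And>n. fnorm - 1 / (real n + 1) < Re (f (xs n))"
    and "0 < fnorm"
  shows "Cauchy xs"
proof (rule metric_CauchyI)
  fix e :: real
  assume "0 < e"
  obtain N :: nat where "8 / (fnorm * e\<^sup>2) < real N"
    using reals_Archimedean2 by blast
  moreover have pos: "0 < fnorm * e\<^sup>2"
    using assms(3) \<open>0 < e\<close> by simp
  ultimately have "8 < real N * (fnorm * e\<^sup>2)"
    by (simp add: pos_divide_less_eq)
  then have N: "8 < (real N + 1) * (fnorm * e\<^sup>2)"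
    using pos by (simp add: distrib_right)
  have "dist (xs m) (xs n) < e" if "N \<le> m" "N \<le> n" for m n
  proof -
    have "1 / (real m + 1) + 1 / (real n + 1) \<le> 2 / (real N + 1)"
      using that frac_le[of 1 1 "real N + 1" "real m + 1"] frac_le[of 1 1 "real N + 1" "real n + 1"]
      by simp
    then have "4 * (1 / (real m + 1) + 1 / (real n + 1)) / fnorm \<le> 4 * (2 / (real N + 1)) / fnorm"
      using assms(3) by (intro divide_right_mono mult_left_mono) auto
    also have "\<dots> = 8 / ((real N + 1) * fnorm)"
      by simp
    also have "\<dots> < e\<^sup>2"
      using N assms(3) by (simp add: pos_divide_less_eq mult_ac)
    finally have "(norm (xs m - xs n))\<^sup>2 < e\<^sup>2"
      using almost_maximizers_close[OF assms(1,1,3) _ _ assms(2,2), of m n] by simp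
    then show ?thesis
      using \<open>0 < e\<close> by (simp add: dist_norm power_less_imp_less_base)
  qed
  then show "\<exists>N. \<forall>m\<ge>N. \<forall>n\<ge>N. dist (xs m) (xs n) < e"
    by blast
qed

lemma norming_vector_exists:
  assumes "0 < fnorm"
  obtains z where "norm z = 1" "f z = of_real fnorm"
proof -
  have "\<exists>x. norm x \<le> 1 \<and> fnorm - 1 / (real n + 1) < Re (f x)" for n
    using less_cSUP_iff[OF _ bdd_above_Re, of "fnorm - 1 / (real n + 1)"]
    by (auto simp: fnorm_def[symmetric] exI[of _ 0])
  then obtain xs where xs: "\<And>n. norm (xs n) \<le> 1" "\<And>n. fnorm - 1 / (real n + 1) < Re (f (xs n))"
    by metis
  then obtain z where lim: "xs \<longlonglongrightarrow> z"
    using maximizing_sequence_Cauchy[OF _ _ assms] Cauchy_convergent convergent_def by blast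
  have z: "norm z \<le> 1"
    using tendsto_norm[OF lim] xs(1) by (meson LIMSEQ_le_const2)
  have "(\<lambda>n. fnorm - 1 / (real n + 1)) \<longlonglongrightarrow> fnorm"
    using LIMSEQ_inverse_real_of_nat_add_minus[of fnorm] by (simp add: inverse_eq_divide add.commute)
  moreover have "(\<lambda>n. Re (f (xs n))) \<longlonglongrightarrow> Re (f z)"
    using tendsto_Re[OF bounded_linear.tendsto[OF bounded_linear lim]] .
  ultimately have "fnorm \<le> Re (f z)"
    using xs(2) by (meson LIMSEQ_le less_imp_le)
  then have Re: "Re (f z) = fnorm"
    using Re_le_fnorm[OF z] by simp
  have "fnorm \<le> cmod (f z)" "cmod (f z) \<le> fnorm * norm z"
    using Re complex_Re_le_cmod[of "f z"] norm_le_fnorm[of z] by simp_all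
  then have "fnorm * 1 \<le> fnorm * norm z"
    by simp
  then have "norm z = 1"
    using z assms by (simp only: mult_le_cancel_left_pos)
  then have "cmod (f z) = fnorm"
    using \<open>fnorm \<le> cmod (f z)\<close> \<open>cmod (f z) \<le> fnorm * norm z\<close> by simp
  then have "f z = of_real fnorm"
    using Re cmod_power2[of "f z"] by (simp add: complex_eq_iff)
  then show ?thesis
    using that \<open>norm z = 1\<close> by blast
qed

theorem representation: "\<exists>z. \<forall>x. f x = cinner x z"
proof (cases "\<forall>x. f x = 0")
  case True
  then show ?thesis
    by (intro exI[of _ 0]) simp
next
  case False
  then have pos: "0 < fnorm"
    using fnorm_pos by blast
  then obtain z where z: "norm z = 1" "f z = of_real fnorm"
    using norming_vector_exists by blast
  have kernel: "cinner y z = 0" if "f y = 0" for y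
  proof (rule orthogonal_if_norm_minimal)
    fix t
    have "fnorm \<le> fnorm * norm (z + scaleC t y)"
      using norm_le_fnorm[of "z + scaleC t y"] z that by (simp add: add scale)
    then show "norm z \<le> norm (z + scaleC t y)"
      using z pos by simp
  qed
  have "f x = cinner x (scaleC (of_real fnorm) z)" for x
  proof -
    have "cinner (x - scaleC (f x / of_real fnorm) z) z = 0"
      using pos z by (intro kernel) (simp add: diff scale)
    then show ?thesis
      using pos z by (simp add: cinner_diff_left cinner_scaleC_left cinner_scaleC_right cinner_self field_simps)
  qed
  then show ?thesis
    by blast
qed

end

section \<open>Bounded operators and adjoints\<close>

lemma bounded_clinear_add: "bounded_clinear T \<Longrightarrow> T (x + y) = T x + T y"
  by (simp add: bounded_clinear_def)

lemma bounded_clinear_scaleC: "bounded_clinear T \<Longrightarrow> T (scaleC a x) = scaleC a (T x)"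
  by (simp add: bounded_clinear_def)

lemma bounded_clinear_imp_bounded_linear: "bounded_clinear T \<Longrightarrow> bounded_linear T"
  unfolding bounded_clinear_def
  by (metis bounded_linear_intro scaleR_scaleC)

lemma norm_le_onorm: "bounded_clinear T \<Longrightarrow> norm (T x) \<le> onorm T * norm x"
  by (rule onorm[OF bounded_clinear_imp_bounded_linear])

lemma bounded_clinear_intro:
  assumes "\<And>x y. T (x + y) = T x + T y" "\<And>a x. T (scaleC a x) = scaleC a (T x)"
    and "\<And>x. norm (T x) \<le> norm x * K"
  shows "bounded_clinear T"
  using assms unfolding bounded_clinear_def by blast

lemma bounded_clinear_comp:
  assumes "bounded_clinear S" "bounded_clinear T"
  shows "bounded_clinear (S \<circ> T)"
proof (rule bounded_clinear_intro)
  fix x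
  have "norm (S (T x)) \<le> onorm S * (onorm T * norm x)"
    using norm_le_onorm[OF assms(1)] norm_le_onorm[OF assms(2)]
      onorm_pos_le[OF bounded_clinear_imp_bounded_linear[OF assms(1)]]
    by (meson mult_left_mono order_trans)
  then show "norm ((S \<circ> T) x) \<le> norm x * (onorm S * onorm T)"
    by (simp add: ac_simps)
qed (use assms in \<open>simp_all add: bounded_clinear_add bounded_clinear_scaleC\<close>)

lemma bounded_clinear_opadd:
  assumes "bounded_clinear S" "bounded_clinear T"
  shows "bounded_clinear (opadd S T)"
proof (rule bounded_clinear_intro)
  fix x
  show "norm (opadd S T x) \<le> norm x * (onorm S + onorm T)"
    using norm_triangle_ineq[of "S x" "T x"] norm_le_onorm[OF assms(1), of x] norm_le_onorm[OF assms(2), of x]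
    by (simp add: opadd_def algebra_simps)
qed (use assms in \<open>simp_all add: opadd_def bounded_clinear_add bounded_clinear_scaleC
      scaleC_add_right algebra_simps\<close>)

lemma cinner_opadd: "cinner (opadd S T x) y = cinner (S x) y + cinner (T x) y"
  by (simp add: opadd_def cinner_add_left)

lemma cinner_cadjoint:
  assumes "bounded_clinear T"
  shows "cinner (T x) y = cinner x (cadjoint T y)"
proof -
  have "\<exists>z. \<forall>x. cinner (T x) y = cinner x z" for y
  proof (rule bounded_cfunctional.representation, unfold_locales)
    show "cinner (T (x + x')) y = cinner (T x) y + cinner (T x') y" for x x'
      using assms by (simp add: bounded_clinear_add cinner_add_left)
    show "cinner (T (scaleC a x)) y = a * cinner (T x) y" for a x
      using assms by (simp add: bounded_clinear_scaleC cinner_scaleC_left)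
    have "cmod (cinner (T x) y) \<le> onorm T * norm x * norm y" for x
      using cinner_Cauchy_Schwarz[of "T x" y] norm_le_onorm[OF assms, of x]
      by (meson mult_right_mono norm_ge_zero order_trans)
    then have "cmod (cinner (T x) y) \<le> norm x * (onorm T * norm y)" for x
      by (simp add: mult_ac)
    then show "\<exists>K. \<forall>x. cmod (cinner (T x) y) \<le> norm x * K"
      by blast
  qed
  then obtain S where S: "\<forall>x y. cinner (T x) y = cinner x (S y)"
    by metis
  have "S' = S" if "\<forall>x y. cinner (T x) y = cinner x (S' y)" for S'
  proof
    fix y
    show "S' y = S y"
      using S that by (intro cinner_ext) simp
  qed
  then have "\<exists>!S. \<forall>x y. cinner (T x) y = cinner x (S y)"
    using S by blast
  then have "\<forall>x y. cinner (T x) y = cinner x (cadjoint T y)"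
    unfolding cadjoint_def by (rule theI')
  then show ?thesis
    by blast
qed

lemma cinner_cadjoint_left: "bounded_clinear T \<Longrightarrow> cinner (cadjoint T y) x = cinner y (T x)"
  by (metis cinner_cadjoint cinner_conj)

lemma bounded_clinear_cadjoint:
  assumes "bounded_clinear T"
  shows "bounded_clinear (cadjoint T)"
proof (rule bounded_clinear_intro)
  fix y
  let ?z = "cadjoint T y"
  have "(norm ?z)\<^sup>2 = cmod (cinner (T ?z) y)"
    by (simp add: cinner_cadjoint[OF assms] cinner_self del: of_real_power)
  also have "\<dots> \<le> onorm T * norm ?z * norm y"
    using cinner_Cauchy_Schwarz[of "T ?z" y] norm_le_onorm[OF assms, of ?z]
    by (meson mult_right_mono norm_ge_zero order_trans)
  finally show "norm ?z \<le> norm y * onorm T"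
    using onorm_pos_le[OF bounded_clinear_imp_bounded_linear[OF assms]]
    by (cases "?z = 0") (auto simp: power2_eq_square mult_ac)
next
  show "cadjoint T (x + y) = cadjoint T x + cadjoint T y" for x y
    by (rule cinner_ext) (simp add: cinner_add_right flip: cinner_cadjoint[OF assms])
  show "cadjoint T (scaleC a x) = scaleC a (cadjoint T x)" for a x
    by (rule cinner_ext) (simp add: cinner_scaleC_right flip: cinner_cadjoint[OF assms])
qed

lemma cadjoint_cadjoint:
  assumes "bounded_clinear T"
  shows "cadjoint (cadjoint T) = T"
proof
  fix x
  show "cadjoint (cadjoint T) x = T x"
  proof (rule cinner_ext)
    fix y
    show "cinner y (cadjoint (cadjoint T) x) = cinner y (T x)"
      using cinner_cadjoint[OF bounded_clinear_cadjoint[OF assms], of y x]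
        cinner_cadjoint_left[OF assms, of y x] by simp
  qed
qed

lemma abs_adj_sq_eq_abs_sq_cadjoint: "bounded_clinear T \<Longrightarrow> abs_adj_sq T = abs_sq (cadjoint T)"
  by (simp add: abs_adj_sq_def abs_sq_def cadjoint_cadjoint)

lemma bounded_clinear_abs_sq: "bounded_clinear T \<Longrightarrow> bounded_clinear (abs_sq T)"
  unfolding abs_sq_def by (intro bounded_clinear_comp bounded_clinear_cadjoint)

lemma bounded_clinear_abs_adj_sq: "bounded_clinear T \<Longrightarrow> bounded_clinear (abs_adj_sq T)"
  by (simp add: abs_adj_sq_eq_abs_sq_cadjoint bounded_clinear_abs_sq bounded_clinear_cadjoint)

lemma cinner_abs_sq: "bounded_clinear T \<Longrightarrow> cinner (abs_sq T x) y = cinner (T x) (T y)"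
  by (simp add: abs_sq_def cinner_cadjoint_left)

lemma cinner_abs_sq_self: "bounded_clinear T \<Longrightarrow> cinner (abs_sq T x) x = of_real ((norm (T x))\<^sup>2)"
  by (simp add: cinner_abs_sq cinner_self del: of_real_power)

lemma cinner_abs_sq_sq_self:
  assumes "bounded_clinear T"
  shows "cinner (abs_sq T (abs_sq T x)) x = of_real ((norm (abs_sq T x))\<^sup>2)"
proof -
  have "cinner (abs_sq T (abs_sq T x)) x = cinner (T (abs_sq T x)) (T x)"
    using assms by (simp add: cinner_abs_sq)
  also have "\<dots> = cinner (abs_sq T x) (abs_sq T x)"
    by (simp add: abs_sq_def cinner_cadjoint[OF assms])
  finally have "cinner (abs_sq T (abs_sq T x)) x = cinner (abs_sq T x) (abs_sq T x)" .
  then show ?thesis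
    by (simp add: cinner_self del: of_real_power)
qed

lemma cinner_abs_adj_sq_self:
  "bounded_clinear T \<Longrightarrow> cinner (abs_adj_sq T x) x = of_real ((norm (cadjoint T x))\<^sup>2)"
  by (simp add: abs_adj_sq_eq_abs_sq_cadjoint cinner_abs_sq_self bounded_clinear_cadjoint)

lemma cinner_abs_adj_sq_sq_self:
  "bounded_clinear T \<Longrightarrow>
    cinner (abs_adj_sq T (abs_adj_sq T x)) x = of_real ((norm (abs_adj_sq T x))\<^sup>2)"
  using cinner_abs_sq_sq_self[OF bounded_clinear_cadjoint] by (simp add: abs_adj_sq_eq_abs_sq_cadjoint)

lemma norm_sq_le_abs_sq:
  assumes "bounded_clinear T"
  shows "(norm (T x))\<^sup>2 \<le> norm x * norm (abs_sq T x)"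
proof -
  have "(norm (T x))\<^sup>2 = cmod (cinner (abs_sq T x) x)"
    using assms by (simp add: cinner_abs_sq_self del: of_real_power)
  also have "\<dots> \<le> norm x * norm (abs_sq T x)"
    using cinner_Cauchy_Schwarz[of "abs_sq T x" x] by (simp add: mult.commute)
  finally show ?thesis .
qed

lemma cinner_le_onorm:
  assumes "bounded_clinear T"
  shows "cmod (cinner (T x) x) \<le> onorm T * (norm x)\<^sup>2"
proof -
  have "cmod (cinner (T x) x) \<le> onorm T * norm x * norm x"
    using cinner_Cauchy_Schwarz[of "T x" x] norm_le_onorm[OF assms, of x]
    by (meson mult_right_mono norm_ge_zero order_trans)
  then show ?thesis
    by (simp add: power2_eq_square mult.assoc)
qed

lemma quadratic_form_le_onorm:
  assumes "bounded_clinear T" "cinner (T x) x = of_real r"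
  shows "r \<le> onorm T * (norm x)\<^sup>2"
  using cinner_le_onorm[OF assms(1), of x] assms(2) by simp

section \<open>Numerical radius\<close>

lemma numrad_upper:
  assumes "bounded_clinear T" "norm x \<le> 1"
  shows "cmod (cinner (T x) x) \<le> numrad T"
proof -
  have "bdd_above ((\<lambda>x. cmod (cinner (T x) x)) ` {x. norm x \<le> 1})"
  proof (rule bdd_aboveI2)
    fix x :: 'a
    assume "x \<in> {x. norm x \<le> 1}"
    then have "onorm T * (norm x)\<^sup>2 \<le> onorm T"
      using onorm_pos_le[OF bounded_clinear_imp_bounded_linear[OF assms(1)]]
      by (simp add: mult_left_le power_le_one)
    then show "cmod (cinner (T x) x) \<le> onorm T"
      using cinner_le_onorm[OF assms(1), of x] by linarith
  qed
  then show ?thesis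
    unfolding numrad_def using assms(2) by (intro cSUP_upper) auto
qed

lemma numrad_nonneg: "bounded_clinear T \<Longrightarrow> 0 \<le> numrad T"
  using numrad_upper[of T 0] by simp

lemma cinner_le_numrad:
  assumes "bounded_clinear T"
  shows "cmod (cinner (T y) y) \<le> numrad T * (norm y)\<^sup>2"
proof (cases "y = 0")
  case True
  then show ?thesis
    using bounded_clinear_scaleC[OF assms, of 0 0] by simp
next
  case False
  define u where "u = scaleC (of_real (1 / norm y)) y"
  have "norm u = 1"
    using False by (simp add: u_def norm_scaleC norm_divide)
  moreover have "cinner (T u) u = of_real (1 / (norm y)\<^sup>2) * cinner (T y) y"
    by (simp add: u_def bounded_clinear_scaleC[OF assms] cinner_scaleC_left cinner_scaleC_right
        power2_eq_square)
  ultimately have "cmod (cinner (T y) y) / (norm y)\<^sup>2 \<le> numrad T"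
    using numrad_upper[OF assms, of u] by (simp add: norm_divide norm_power)
  then show ?thesis
    using False by (simp add: field_simps)
qed

lemma numrad_power_le:
  assumes "0 < n" and bound: "\<And>x. norm x \<le> 1 \<Longrightarrow> cmod (cinner (T x) x) ^ n \<le> R"
  shows "numrad T ^ n \<le> R"
proof -
  have R: "0 \<le> R"
    using bound[of 0] assms(1) by (simp add: power_0_left)
  have le_root: "cmod (cinner (T x) x) \<le> root n R" if "norm x \<le> 1" for x
  proof -
    have "root n (cmod (cinner (T x) x) ^ n) \<le> root n R"
      using bound[OF that] assms(1) by (simp only: real_root_le_iff)
    then show ?thesis
      using assms(1) by (simp add: real_root_power_cancel)
  qed
  then have bdd: "bdd_above ((\<lambda>x. cmod (cinner (T x) x)) ` {x. norm x \<le> 1})"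
    by (intro bdd_aboveI2) simp
  have "numrad T \<le> root n R"
    unfolding numrad_def by (rule cSUP_least) (auto intro: le_root exI[of _ 0])
  moreover have "0 \<le> numrad T"
    using cSUP_upper[OF _ bdd, of 0] by (simp add: numrad_def)
  ultimately have "numrad T ^ n \<le> root n R ^ n"
    by (simp add: power_mono)
  then show ?thesis
    using assms(1) R by (simp add: real_root_pow_pos2)
qed

lemma numrad_block_eq_numrad:
  "numrad_block A B C D = numrad (\<lambda>p. (A (fst p) + B (snd p), C (fst p) + D (snd p)))"
proof -
  have "{(x1, x2). (norm x1)\<^sup>2 + (norm x2)\<^sup>2 \<le> 1} = {p :: 'a \<times> 'a. norm p \<le> 1}"
    by (auto simp: norm_prod_def)
  then show ?thesis
    unfolding numrad_block_def numrad_def by (simp add: cinner_prod_def case_prod_beta)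
qed

section \<open>The off-diagonal operator matrix\<close>

lemma weighted_le_max:
  fixes X Y r s :: real
  assumes "0 \<le> r" "0 \<le> s" "r + s \<le> 1" "0 \<le> max X Y"
  shows "X * r + Y * s \<le> max X Y"
proof -
  have "X * r + Y * s \<le> max X Y * r + max X Y * s"
    using assms by (intro add_mono mult_right_mono) auto
  also have "\<dots> \<le> max X Y"
    using assms by (simp add: mult_left_le flip: distrib_left)
  finally show ?thesis .
qed

lemma sum_squares_sq_le:
  fixes n1 n2 u1 u2 p1 p2 :: real
  assumes "n1\<^sup>2 + n2\<^sup>2 \<le> 1" "u1\<^sup>2 \<le> n1 * p1" "u2\<^sup>2 \<le> n2 * p2"
  shows "(u1\<^sup>2 + u2\<^sup>2)\<^sup>2 \<le> p1\<^sup>2 + p2\<^sup>2"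
proof -
  have "(u1\<^sup>2 + u2\<^sup>2)\<^sup>2 \<le> (n1 * p1 + n2 * p2)\<^sup>2"
    using assms(2,3) by (intro power_mono) auto
  also have "\<dots> \<le> (n1\<^sup>2 + n2\<^sup>2) * (p1\<^sup>2 + p2\<^sup>2)"
    using zero_le_power2[of "n1 * p2 - n2 * p1"] by (simp add: power2_eq_square algebra_simps)
  also have "\<dots> \<le> p1\<^sup>2 + p2\<^sup>2"
    using assms(1) by (simp add: mult_left_le_one_le)
  finally show ?thesis .
qed

text \<open>Expand ((a b + t) / 2)^2 and bound the share alpha of t^2 by (a b)^2, the rest by W2.\<close>
lemma fourth_power_estimate:
  fixes a b t v W W2 N2 N4 \<alpha> :: real
  assumes "0 \<le> a" "0 \<le> b" "0 \<le> t" "0 \<le> v" "0 \<le> \<alpha>" "\<alpha> \<le> 1"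
    and "v\<^sup>2 \<le> (a * b + t) / 2" "t \<le> a * b" "t \<le> W" "t\<^sup>2 \<le> W2"
    and "a\<^sup>2 + b\<^sup>2 \<le> N2" "a ^ 4 + b ^ 4 \<le> N4"
  shows "v ^ 4 \<le> (1 + \<alpha>) / 8 * N4 + (1 - \<alpha>) / 4 * W2 + 1 / 4 * N2 * W"
proof -
  define S where "S = a * b"
  have S: "0 \<le> S" "2 * S\<^sup>2 \<le> N4" "2 * S \<le> N2"
    using assms(1,2,11,12) zero_le_power2[of "a\<^sup>2 - b\<^sup>2"] zero_le_power2[of "a - b"]
    by (auto simp: S_def power2_eq_square algebra_simps power4_eq_xxxx)
  have "v ^ 4 \<le> ((S + t) / 2)\<^sup>2"
    using assms(4,7) power_mono[of "v\<^sup>2" "(S + t) / 2" 2] by (simp add: S_def)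
  moreover have "\<alpha> * t\<^sup>2 \<le> \<alpha> * S\<^sup>2"
    using assms(3,5,8) by (intro mult_left_mono power_mono) (auto simp: S_def)
  moreover have "(1 - \<alpha>) * t\<^sup>2 \<le> (1 - \<alpha>) * W2"
    using assms(6,10) by (intro mult_left_mono) auto
  moreover have "2 * S * t \<le> N2 * W"
    using S assms(3,9) by (intro mult_mono) auto
  moreover have "\<alpha> * (2 * S\<^sup>2) \<le> \<alpha> * N4"
    using S assms(5) by (intro mult_left_mono)
  ultimately show ?thesis
    using S by (simp add: power2_eq_square field_simps)
qed

context
  fixes B C :: "'a::chilbert_space \<Rightarrow> 'a"
  assumes B: "bounded_clinear B" and C: "bounded_clinear C"
begin

text \<open>The form equals both <(B x2, C x1), (x1, x2)> and <(x1, x2), (C* x2, B* x1)>, so Buzano's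
inequality applies.\<close>
lemma offdiag_form_sq_le:
  assumes "norm (x1, x2) \<le> 1"
  shows "(cmod (cinner (B x2, C x1) (x1, x2)))\<^sup>2
    \<le> (norm (B x2, C x1) * norm (cadjoint C x2, cadjoint B x1)
        + cmod (cinner (B x2, C x1) (cadjoint C x2, cadjoint B x1))) / 2"
proof -
  let ?z = "cinner (B x2, C x1) (x1, x2)"
  have "cinner (x1, x2) (cadjoint C x2, cadjoint B x1) = ?z"
    by (simp add: cinner_Pair add.commute flip: cinner_cadjoint[OF B] cinner_cadjoint[OF C])
  then have "(cmod ?z)\<^sup>2 \<le> (norm (x1, x2))\<^sup>2
      * (norm (B x2, C x1) * norm (cadjoint C x2, cadjoint B x1)
         + cmod (cinner (B x2, C x1) (cadjoint C x2, cadjoint B x1))) / 2"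
    using Buzano_inequality[of "(B x2, C x1)" "(x1, x2)" "(cadjoint C x2, cadjoint B x1)"]
    by (simp add: norm_mult power2_eq_square)
  also have "\<dots> \<le> 1 * (norm (B x2, C x1) * norm (cadjoint C x2, cadjoint B x1)
      + cmod (cinner (B x2, C x1) (cadjoint C x2, cadjoint B x1))) / 2"
    using assms by (intro divide_right_mono mult_right_mono) (auto simp: power_le_one)
  finally show ?thesis
    by simp
qed

lemma offdiag_cross_term_le:
  assumes "norm (x1, x2) \<le> 1"
  shows "cmod (cinner (B x2, C x1) (cadjoint C x2, cadjoint B x1))
    \<le> max (numrad (B \<circ> C)) (numrad (C \<circ> B))"
proof -
  have "cinner (B x2, C x1) (cadjoint C x2, cadjoint B x1)
      = cinner ((C \<circ> B) x2) x2 + cinner ((B \<circ> C) x1) x1"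
    by (simp add: cinner_Pair cinner_cadjoint[OF B] cinner_cadjoint[OF C])
  then have "cmod (cinner (B x2, C x1) (cadjoint C x2, cadjoint B x1))
      \<le> cmod (cinner ((C \<circ> B) x2) x2) + cmod (cinner ((B \<circ> C) x1) x1)"
    by (simp only: norm_triangle_ineq)
  also have "\<dots> \<le> numrad (C \<circ> B) * (norm x2)\<^sup>2 + numrad (B \<circ> C) * (norm x1)\<^sup>2"
    using B C by (intro add_mono cinner_le_numrad bounded_clinear_comp)
  also have "\<dots> \<le> max (numrad (C \<circ> B)) (numrad (B \<circ> C))"
    using assms numrad_nonneg[OF bounded_clinear_comp[OF B C]]
    by (intro weighted_le_max) (auto simp: norm_Pair)
  finally show ?thesis
    by (simp add: max.commute)
qed

lemma offdiag_sq_sum_le: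
  assumes "norm (x1, x2) \<le> 1"
  shows "(norm (B x2, C x1))\<^sup>2 + (norm (cadjoint C x2, cadjoint B x1))\<^sup>2
    \<le> max (onorm (opadd (abs_sq B) (abs_adj_sq C))) (onorm (opadd (abs_adj_sq B) (abs_sq C)))"
proof -
  have "(norm (B x2))\<^sup>2 + (norm (cadjoint C x2))\<^sup>2
      \<le> onorm (opadd (abs_sq B) (abs_adj_sq C)) * (norm x2)\<^sup>2"
    using B C
    by (intro quadratic_form_le_onorm bounded_clinear_opadd bounded_clinear_abs_sq
        bounded_clinear_abs_adj_sq) (simp_all add: cinner_opadd cinner_abs_sq_self cinner_abs_adj_sq_self)
  moreover have "(norm (cadjoint B x1))\<^sup>2 + (norm (C x1))\<^sup>2
      \<le> onorm (opadd (abs_adj_sq B) (abs_sq C)) * (norm x1)\<^sup>2"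
    using B C
    by (intro quadratic_form_le_onorm bounded_clinear_opadd bounded_clinear_abs_sq
        bounded_clinear_abs_adj_sq) (simp_all add: cinner_opadd cinner_abs_sq_self cinner_abs_adj_sq_self)
  moreover have "onorm (opadd (abs_sq B) (abs_adj_sq C)) * (norm x2)\<^sup>2
      + onorm (opadd (abs_adj_sq B) (abs_sq C)) * (norm x1)\<^sup>2
      \<le> max (onorm (opadd (abs_sq B) (abs_adj_sq C))) (onorm (opadd (abs_adj_sq B) (abs_sq C)))"
    using assms B C
    by (intro weighted_le_max)
       (auto simp: norm_Pair add.commute intro!: max.coboundedI1 onorm_pos_le bounded_clinear_imp_bounded_linear
         bounded_clinear_opadd bounded_clinear_abs_sq bounded_clinear_abs_adj_sq)
  ultimately show ?thesis
    by (simp add: norm_Pair)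
qed

lemma offdiag_fourth_sum_le:
  assumes "norm (x1, x2) \<le> 1"
  shows "norm (B x2, C x1) ^ 4 + norm (cadjoint C x2, cadjoint B x1) ^ 4
    \<le> max (onorm (opadd (abs_sq B \<circ> abs_sq B) (abs_adj_sq C \<circ> abs_adj_sq C)))
           (onorm (opadd (abs_adj_sq B \<circ> abs_adj_sq B) (abs_sq C \<circ> abs_sq C)))"
proof -
  have n: "(norm x2)\<^sup>2 + (norm x1)\<^sup>2 \<le> 1"
    using assms by (simp add: norm_Pair add.commute)
  have fourth: "norm (a, b) ^ 4 = ((norm a)\<^sup>2 + (norm b)\<^sup>2)\<^sup>2" for a b :: 'a
    using power_mult[of "norm (a, b)" 2 2] by (simp add: norm_Pair)
  have "norm (B x2, C x1) ^ 4 \<le> (norm (abs_sq B x2))\<^sup>2 + (norm (abs_sq C x1))\<^sup>2"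
    unfolding fourth by (rule sum_squares_sq_le[OF n norm_sq_le_abs_sq[OF B] norm_sq_le_abs_sq[OF C]])
  moreover have "norm (cadjoint C x2, cadjoint B x1) ^ 4
      \<le> (norm (abs_adj_sq C x2))\<^sup>2 + (norm (abs_adj_sq B x1))\<^sup>2"
    unfolding fourth abs_adj_sq_eq_abs_sq_cadjoint[OF B] abs_adj_sq_eq_abs_sq_cadjoint[OF C]
    by (rule sum_squares_sq_le[OF n norm_sq_le_abs_sq norm_sq_le_abs_sq])
      (intro bounded_clinear_cadjoint B C)+
  moreover have "(norm (abs_sq B x2))\<^sup>2 + (norm (abs_adj_sq C x2))\<^sup>2
      \<le> onorm (opadd (abs_sq B \<circ> abs_sq B) (abs_adj_sq C \<circ> abs_adj_sq C)) * (norm x2)\<^sup>2"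
    using B C
    by (intro quadratic_form_le_onorm bounded_clinear_opadd bounded_clinear_comp bounded_clinear_abs_sq
        bounded_clinear_abs_adj_sq) (simp_all add: cinner_opadd cinner_abs_sq_sq_self cinner_abs_adj_sq_sq_self)
  moreover have "(norm (abs_adj_sq B x1))\<^sup>2 + (norm (abs_sq C x1))\<^sup>2
      \<le> onorm (opadd (abs_adj_sq B \<circ> abs_adj_sq B) (abs_sq C \<circ> abs_sq C)) * (norm x1)\<^sup>2"
    using B C
    by (intro quadratic_form_le_onorm bounded_clinear_opadd bounded_clinear_comp bounded_clinear_abs_sq
        bounded_clinear_abs_adj_sq) (simp_all add: cinner_opadd cinner_abs_sq_sq_self cinner_abs_adj_sq_sq_self)
  moreover have "onorm (opadd (abs_sq B \<circ> abs_sq B) (abs_adj_sq C \<circ> abs_adj_sq C)) * (norm x2)\<^sup>2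
      + onorm (opadd (abs_adj_sq B \<circ> abs_adj_sq B) (abs_sq C \<circ> abs_sq C)) * (norm x1)\<^sup>2
      \<le> max (onorm (opadd (abs_sq B \<circ> abs_sq B) (abs_adj_sq C \<circ> abs_adj_sq C)))
           (onorm (opadd (abs_adj_sq B \<circ> abs_adj_sq B) (abs_sq C \<circ> abs_sq C)))"
    using n B C
    by (intro weighted_le_max)
       (auto intro!: max.coboundedI1 onorm_pos_le bounded_clinear_imp_bounded_linear bounded_clinear_opadd
         bounded_clinear_comp bounded_clinear_abs_sq bounded_clinear_abs_adj_sq)
  ultimately show ?thesis
    by linarith
qed

lemma offdiag_form_fourth_power_le:
  assumes "norm (x1, x2) \<le> 1" "0 \<le> \<alpha>" "\<alpha> \<le> 1"
  shows "cmod (cinner (B x2, C x1) (x1, x2)) ^ 4 \<le>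
     (1 + \<alpha>) / 8 * max (onorm (opadd (abs_sq B \<circ> abs_sq B) (abs_adj_sq C \<circ> abs_adj_sq C)))
                         (onorm (opadd (abs_adj_sq B \<circ> abs_adj_sq B) (abs_sq C \<circ> abs_sq C)))
     + (1 - \<alpha>) / 4 * max ((numrad (B \<circ> C))\<^sup>2) ((numrad (C \<circ> B))\<^sup>2)
     + 1 / 4 * max (onorm (opadd (abs_sq B) (abs_adj_sq C))) (onorm (opadd (abs_adj_sq B) (abs_sq C)))
             * max (numrad (B \<circ> C)) (numrad (C \<circ> B))"
proof (rule fourth_power_estimate)
  let ?t = "cmod (cinner (B x2, C x1) (cadjoint C x2, cadjoint B x1))"
  show "?t \<le> norm (B x2, C x1) * norm (cadjoint C x2, cadjoint B x1)"
    by (rule cinner_Cauchy_Schwarz)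
  show tW: "?t \<le> max (numrad (B \<circ> C)) (numrad (C \<circ> B))"
    using assms(1) by (rule offdiag_cross_term_le)
  have "0 \<le> numrad (B \<circ> C)" "0 \<le> numrad (C \<circ> B)"
    using B C by (simp_all add: numrad_nonneg bounded_clinear_comp)
  then show "?t\<^sup>2 \<le> max ((numrad (B \<circ> C))\<^sup>2) ((numrad (C \<circ> B))\<^sup>2)"
    using tW by (auto simp: max_def intro: power_mono order_trans dest: power2_le_imp_le)
qed (use assms offdiag_form_sq_le offdiag_sq_sum_le offdiag_fourth_sum_le in auto)

end

theorem mainTheorem10:
  fixes B C :: "'a::chilbert_space \<Rightarrow> 'a" and \<alpha> :: real
  assumes "bounded_clinear B" and "bounded_clinear C"
    and "0 \<le> \<alpha>" and "\<alpha> \<le> 1"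
  shows "(numrad_block (\<lambda>_. 0) B C (\<lambda>_. 0)) ^ 4 \<le>
     (1 + \<alpha>) / 8 * max (onorm (opadd (abs_sq B \<circ> abs_sq B) (abs_adj_sq C \<circ> abs_adj_sq C)))
                         (onorm (opadd (abs_adj_sq B \<circ> abs_adj_sq B) (abs_sq C \<circ> abs_sq C)))
     + (1 - \<alpha>) / 4 * max ((numrad (B \<circ> C))\<^sup>2) ((numrad (C \<circ> B))\<^sup>2)
     + 1 / 4 * max (onorm (opadd (abs_sq B) (abs_adj_sq C))) (onorm (opadd (abs_adj_sq B) (abs_sq C)))
             * max (numrad (B \<circ> C)) (numrad (C \<circ> B))"
  unfolding numrad_block_eq_numrad
  using offdiag_form_fourth_power_le[OF assms(1,2) _ assms(3,4)]
  by (intro numrad_power_le) (auto simp: split_paired_all)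

end
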